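(* Let $(M,g)$ be a Riemannian manifold of dimension $n$, with the objects $\mathcal{T}M$, $V$, $G$, $\xi_1,\xi_2$, $\omega^1,\omega^2$, $f$ as described in the context (on the open subset of $\mathcal{T}M$ where $F^2+K^2>0$). Let $V_{\xi_2}=\{X\in V:\ \omega^2(X)=0\}$ be the vertical Liouville distribution (the $G$-orthogonal complement of $\xi_2$ in $V$, of rank $2n-1$), let $\overline{f}$ be the restriction of $f$ to $V_{\xi_2}$ (which takes values in $V_{\xi_2}$), let $\overline{\xi}=\xi_1$ (a section of $V_{\xi_2}$) and $\overline{\eta}=\omega^1|_{V_{\xi_2}}$. Then $(\overline{f},\overline{\xi},\overline{\eta})$ is an almost contact structure on $V_{\xi_2}$; more precisely: (i) $\overline{f}^3+\overline{f}=0$ and $\operatorname{rank}\overline{f}=2n-2$; (ii) $\overline{\eta}(\overline{\xi})=1$, $\overline{f}(\overline{\xi})=0$, $\overline{\eta}\circ\overline{f}=0$; (iii) $\overline{f}^2(X)=-X+\overline{\eta}(X)\overline{\xi}$ for every $X\in\Gamma(V_{\xi_2})$.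
   Context: Let $M$ be an $n$-dimensional smooth manifold with a Riemannian metric $g=(g_{ij})$, with inverse matrix $(g^{ij})$; summation convention is used. The big-tangent manifold $\mathcal{T}M$ is the total space of the Whitney sum $TM\oplus T^*M\to M$; over a chart $(U,(x^i))$ of $M$ it has coordinates $(x^i,y^i,p_i)$, the point being $y^i\frac{\partial}{\partial x^i}|_x+p_i\,dx^i|_x$. The vertical bundle $V\subset T\mathcal{T}M$ is the subbundle tangent to the fibres of $\mathcal{T}M\to M$, locally spanned by $\{\frac{\partial}{\partial y^i},\frac{\partial}{\partial p_i}\}$. Put $y_i=g_{ij}y^j$, $p^i=g^{ij}p_j$, $F^2=g_{ij}y^iy^j$, $K^2=g^{ij}p_ip_j$; all objects are considered on the open set where $F^2+K^2>0$. $G$ is the metric on $V$ with $G(\frac{\partial}{\partial y^i},\frac{\partial}{\partial y^j})=g_{ij}$, $G(\frac{\partial}{\partial p_i},\frac{\partial}{\partial p_j})=g^{ij}$, $G(\frac{\partial}{\partial y^i},\frac{\partial}{\partial p_j})=0$. $\phi:V\to V$ is the bundle endomorphism with $\phi(\frac{\partial}{\partial y^i})=-g_{ij}\frac{\partial}{\partial p_j}$, $\phi(\frac{\partial}{\partial p_i})=g^{ij}\frac{\partial}{\partial y^j}$. Set $\xi_2=\frac{1}{\sqrt{F^2+K^2}}\big(y^i\frac{\partial}{\partial y^i}+p_i\frac{\partial}{\partial p_i}\big)$ and $\xi_1=\frac{1}{\sqrt{F^2+K^2}}\big(p^i\frac{\partial}{\partial y^i}-y_i\frac{\partial}{\partial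 p_i}\big)$. Let $\omega^1,\omega^2$ be the sections of $V^*$ given by $\omega^1(\frac{\partial}{\partial y^i})=\frac{p_i}{\sqrt{F^2+K^2}}$, $\omega^1(\frac{\partial}{\partial p_i})=-\frac{y^i}{\sqrt{F^2+K^2}}$, $\omega^2(\frac{\partial}{\partial y^i})=\frac{y_i}{\sqrt{F^2+K^2}}$, $\omega^2(\frac{\partial}{\partial p_i})=\frac{p^i}{\sqrt{F^2+K^2}}$. Define $f:V\to V$ by $f(X)=\phi(X)-\omega^2(X)\xi_1+\omega^1(X)\xi_2$. *)

theory Defs
  imports "HOL-Analysis.Analysis"
begin

text \<open>At a point u = (x,y,p) of the big-tangent manifold, the vertical
space V_u is identified with pairs (a,b) of coefficient vectors, X = a^i d/dy^i + b_i d/dp_i.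
g is the matrix (g_ij(x)), its inverse is (g^ij(x)).\<close>

type_synonym 'n vert = "(real^'n) \<times> (real^'n)"

definition ginv :: "real^'n^'n \<Rightarrow> real^'n^'n" where
  "ginv g = matrix_inv g"

definition FK2 :: "real^'n^'n \<Rightarrow> real^'n \<Rightarrow> real^'n \<Rightarrow> real" where
  "FK2 g y p = y \<bullet> (g *v y) + p \<bullet> (ginv g *v p)"

definition phiV :: "real^'n^'n \<Rightarrow> 'n vert \<Rightarrow> 'n vert" where
  "phiV g X = (ginv g *v snd X, - (g *v fst X))"

definition xi1 :: "real^'n^'n \<Rightarrow> real^'n \<Rightarrow> real^'n \<Rightarrow> 'n vert" where
  "xi1 g y p = (1 / sqrt (FK2 g y p)) *\<^sub>R (ginv g *v p, - (g *v y))"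

definition xi2 :: "real^'n^'n \<Rightarrow> real^'n \<Rightarrow> real^'n \<Rightarrow> 'n vert" where
  "xi2 g y p = (1 / sqrt (FK2 g y p)) *\<^sub>R (y, p)"

definition omega1 :: "real^'n^'n \<Rightarrow> real^'n \<Rightarrow> real^'n \<Rightarrow> 'n vert \<Rightarrow> real" where
  "omega1 g y p X = (p \<bullet> fst X - y \<bullet> snd X) / sqrt (FK2 g y p)"

definition omega2 :: "real^'n^'n \<Rightarrow> real^'n \<Rightarrow> real^'n \<Rightarrow> 'n vert \<Rightarrow> real" where
  "omega2 g y p X = ((g *v y) \<bullet> fst X + (ginv g *v p) \<bullet> snd X) / sqrt (FK2 g y p)"

definition fV :: "real^'n^'n \<Rightarrow> real^'n \<Rightarrow> real^'n \<Rightarrow> 'n vert \<Rightarrow> 'n vert" where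
  "fV g y p X = phiV g X - omega2 g y p X *\<^sub>R xi1 g y p + omega1 g y p X *\<^sub>R xi2 g y p"

definition Vxi2 :: "real^'n^'n \<Rightarrow> real^'n \<Rightarrow> real^'n \<Rightarrow> 'n vert set" where
  "Vxi2 g y p = {X. omega2 g y p X = 0}"

end

theory Submission
  imports Defs
begin

(* At a point of the big-tangent manifold everything is linear algebra in the fibre V:
   phi is a complex structure (phi^2 = -1) with phi xi_2 = xi_1 and omega^1 o phi = omega^2,
   and omega^i(xi_j) = delta_ij.  Consequently f kills xi_1 and xi_2 and agrees with phi on
   the common kernel W of omega^1 and omega^2, which phi preserves.  So f maps V into W and
   the kernel of omega^2 onto W, f^2 = -1 on W, and all identities follow; the rank is
   dim W = 2n - 2 because omega^1 and omega^2 are linearly independent. *)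

locale almost_complex_pair =
  fixes J :: "'v::real_vector \<Rightarrow> 'v" and \<xi>\<^sub>1 \<xi>\<^sub>2 :: 'v and \<eta>\<^sub>1 \<eta>\<^sub>2 :: "'v \<Rightarrow> real"
  assumes linear_J: "linear J"
    and linear_\<eta>\<^sub>1: "linear \<eta>\<^sub>1"
    and J_J: "J (J X) = - X"
    and J_\<xi>\<^sub>2: "J \<xi>\<^sub>2 = \<xi>\<^sub>1"
    and \<eta>\<^sub>1_J: "\<eta>\<^sub>1 (J X) = \<eta>\<^sub>2 X"
    and \<eta>\<^sub>2_\<xi>\<^sub>1: "\<eta>\<^sub>2 \<xi>\<^sub>1 = 0"
    and \<eta>\<^sub>2_\<xi>\<^sub>2: "\<eta>\<^sub>2 \<xi>\<^sub>2 = 1"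
begin

lemma J_\<xi>\<^sub>1: "J \<xi>\<^sub>1 = - \<xi>\<^sub>2"
  using J_J[of \<xi>\<^sub>2] by (simp add: J_\<xi>\<^sub>2)

lemma linear_\<eta>\<^sub>2: "linear \<eta>\<^sub>2"
proof -
  have "\<eta>\<^sub>2 = \<eta>\<^sub>1 \<circ> J" by (simp add: fun_eq_iff \<eta>\<^sub>1_J)
  then show ?thesis using linear_compose[OF linear_J linear_\<eta>\<^sub>1] by simp
qed

lemma \<eta>\<^sub>2_J: "\<eta>\<^sub>2 (J X) = - \<eta>\<^sub>1 X"
proof -
  have "\<eta>\<^sub>2 (J X) = \<eta>\<^sub>1 (J (J X))" by (rule \<eta>\<^sub>1_J[symmetric])
  then show ?thesis by (simp add: J_J linear_neg[OF linear_\<eta>\<^sub>1])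
qed

lemma \<eta>\<^sub>1_\<xi>\<^sub>1: "\<eta>\<^sub>1 \<xi>\<^sub>1 = 1"
  by (metis J_\<xi>\<^sub>2 \<eta>\<^sub>1_J \<eta>\<^sub>2_\<xi>\<^sub>2)

lemma \<eta>\<^sub>1_\<xi>\<^sub>2: "\<eta>\<^sub>1 \<xi>\<^sub>2 = 0"
proof -
  have "\<eta>\<^sub>1 \<xi>\<^sub>2 = - \<eta>\<^sub>1 (J \<xi>\<^sub>1)" by (simp add: J_\<xi>\<^sub>1 linear_neg[OF linear_\<eta>\<^sub>1])
  then show ?thesis by (simp add: \<eta>\<^sub>1_J \<eta>\<^sub>2_\<xi>\<^sub>1)
qed

definition f :: "'v \<Rightarrow> 'v" where
  "f X = J X - \<eta>\<^sub>2 X *\<^sub>R \<xi>\<^sub>1 + \<eta>\<^sub>1 X *\<^sub>R \<xi>\<^sub>2"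

lemma linear_f: "linear f"
  using linear_J linear_\<eta>\<^sub>1 linear_\<eta>\<^sub>2
  by (intro linearI) (simp_all add: f_def linear_add linear_scale algebra_simps)

lemma \<eta>\<^sub>1_f: "\<eta>\<^sub>1 (f X) = 0"
  using linear_\<eta>\<^sub>1 by (simp add: f_def linear_add linear_diff linear_scale \<eta>\<^sub>1_J \<eta>\<^sub>1_\<xi>\<^sub>1 \<eta>\<^sub>1_\<xi>\<^sub>2)

lemma \<eta>\<^sub>2_f: "\<eta>\<^sub>2 (f X) = 0"
  using linear_\<eta>\<^sub>2 by (simp add: f_def linear_add linear_diff linear_scale \<eta>\<^sub>2_J \<eta>\<^sub>2_\<xi>\<^sub>1 \<eta>\<^sub>2_\<xi>\<^sub>2)

lemma f_\<xi>\<^sub>1: "f \<xi>\<^sub>1 = 0"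
  by (simp add: f_def J_\<xi>\<^sub>1 \<eta>\<^sub>1_\<xi>\<^sub>1 \<eta>\<^sub>2_\<xi>\<^sub>1)

lemma f_eq_J_on_common_kernel: "\<eta>\<^sub>1 Z = 0 \<Longrightarrow> \<eta>\<^sub>2 Z = 0 \<Longrightarrow> f Z = J Z"
  by (simp add: f_def)

lemma f_f: "\<eta>\<^sub>2 X = 0 \<Longrightarrow> f (f X) = - X + \<eta>\<^sub>1 X *\<^sub>R \<xi>\<^sub>1"
proof -
  assume "\<eta>\<^sub>2 X = 0"
  then have "f X = J X + \<eta>\<^sub>1 X *\<^sub>R \<xi>\<^sub>2" by (simp add: f_def)
  moreover have "f (f X) = J (f X)"
    by (rule f_eq_J_on_common_kernel[OF \<eta>\<^sub>1_f \<eta>\<^sub>2_f])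
  ultimately show ?thesis
    using linear_J by (simp add: linear_add linear_scale J_J J_\<xi>\<^sub>2)
qed

lemma f_f_f: "\<eta>\<^sub>2 X = 0 \<Longrightarrow> f (f (f X)) + f X = 0"
  using f_f[OF \<eta>\<^sub>2_f] by (simp add: \<eta>\<^sub>1_f)

lemma image_f_kernel: "f ` {X. \<eta>\<^sub>2 X = 0} = {X. \<eta>\<^sub>1 X = 0 \<and> \<eta>\<^sub>2 X = 0}"
proof
  show "f ` {X. \<eta>\<^sub>2 X = 0} \<subseteq> {X. \<eta>\<^sub>1 X = 0 \<and> \<eta>\<^sub>2 X = 0}"
    by (auto simp: \<eta>\<^sub>1_f \<eta>\<^sub>2_f)
next
  show "{X. \<eta>\<^sub>1 X = 0 \<and> \<eta>\<^sub>2 X = 0} \<subseteq> f ` {X. \<eta>\<^sub>2 X = 0}"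
  proof
    fix Z assume "Z \<in> {X. \<eta>\<^sub>1 X = 0 \<and> \<eta>\<^sub>2 X = 0}"
    then have "Z = f (- f Z)"
      using f_f[of Z] linear_f by (simp add: linear_neg)
    moreover have "\<eta>\<^sub>2 (- f Z) = 0"
      using linear_\<eta>\<^sub>2 by (simp add: linear_neg \<eta>\<^sub>2_f)
    ultimately show "Z \<in> f ` {X. \<eta>\<^sub>2 X = 0}" by blast
  qed
qed

end

lemma dim_orthogonal_complement:
  fixes S :: "'a::euclidean_space set"
  shows "dim {z. \<forall>u\<in>S. u \<bullet> z = 0} = DIM('a) - dim S"
proof -
  have "(\<forall>u\<in>S. u \<bullet> z = 0) \<longleftrightarrow> (\<forall>u\<in>span S. orthogonal u z)" for z
    by (metis orthogonal_def orthogonal_commute orthogonal_to_span span_base)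
  then have "{z. \<forall>u\<in>S. u \<bullet> z = 0} = {z \<in> UNIV. \<forall>u\<in>span S. orthogonal u z}"
    by blast
  moreover have "dim {z \<in> UNIV. \<forall>u\<in>span S. orthogonal u z} + dim (span S) = dim (UNIV :: 'a set)"
    by (rule dim_subspace_orthogonal_to_vectors) (auto simp: subspace_span)
  ultimately show ?thesis by (simp add: dim_UNIV)
qed

lemma dim_pair_with_dual_basis:
  fixes u\<^sub>1 u\<^sub>2 a b :: "'a::real_inner"
  assumes "u\<^sub>1 \<bullet> a = 1" and "u\<^sub>2 \<bullet> a = 0" and "u\<^sub>2 \<bullet> b = 1"
  shows "dim {u\<^sub>1, u\<^sub>2} = 2"
proof -
  have "u\<^sub>1 \<notin> span {u\<^sub>2}"
    using assms(1,2) by (auto simp: span_singleton)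
  moreover have "u\<^sub>2 \<noteq> 0" using assms(3) by auto
  ultimately have "independent {u\<^sub>1, u\<^sub>2}"
    by (intro independent_insertI) (auto simp: independent_empty)
  moreover have "u\<^sub>1 \<noteq> u\<^sub>2" using assms(1,2) by auto
  ultimately show ?thesis by (simp add: dim_eq_card_independent)
qed

lemma positive_definite_imp_invertible:
  fixes A :: "real^'n^'n"
  assumes "\<And>v. v \<noteq> 0 \<Longrightarrow> v \<bullet> (A *v v) > 0"
  shows "invertible A"
proof -
  have "\<forall>x. A *v x = 0 \<longrightarrow> x = 0"
    using assms by (metis inner_zero_right less_irrefl)
  then show ?thesis
    using matrix_left_invertible_ker invertible_left_inverse by blast
qed

lemma invertible_matrix_inv:
  fixes A :: "real^'n^'n"
  assumes "invertible A"
  shows "A ** matrix_inv A = mat 1" and "matrix_inv A ** A = mat 1"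
  using someI_ex[OF assms[unfolded invertible_def]] by (simp_all add: matrix_inv_def)

lemma invertible_matrix_inv_vector:
  fixes A :: "real^'n^'n"
  assumes "invertible A"
  shows "A *v (matrix_inv A *v v) = v" and "matrix_inv A *v (A *v v) = v"
  using invertible_matrix_inv[OF assms]
  by (metis matrix_vector_mul_assoc matrix_vector_mul_lid)+

lemma symmetric_matrix_inv:
  fixes A :: "real^'n^'n"
  assumes "transpose A = A" and "invertible A"
  shows "transpose (matrix_inv A) = matrix_inv A"
proof -
  note inv = invertible_matrix_inv[OF assms(2)]
  have "transpose (matrix_inv A) ** A = mat 1"
    using inv(1) by (metis assms(1) matrix_transpose_mul transpose_mat)
  then have "transpose (matrix_inv A) ** (A ** matrix_inv A) = matrix_inv A"
    by (simp add: matrix_mul_assoc)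
  then show ?thesis using inv(1) by simp
qed

lemma symmetric_matrix_inner:
  fixes A :: "real^'n^'n"
  assumes "transpose A = A"
  shows "(A *v a) \<bullet> b = a \<bullet> (A *v b)"
  by (metis assms dot_lmul_matrix transpose_matrix_vector)

lemma linear_phiV: "linear (phiV g)"
  by (intro linearI)
     (simp_all add: phiV_def matrix_vector_right_distrib matrix_vector_mult_scaleR)

lemma phiV_phiV: "invertible g \<Longrightarrow> phiV g (phiV g X) = - X"
  by (cases X) (simp add: phiV_def ginv_def vec.neg invertible_matrix_inv_vector)

lemma phiV_xi2: "phiV g (xi2 g y p) = xi1 g y p"
  by (simp add: phiV_def xi1_def xi2_def matrix_vector_mult_scaleR)

lemma omega1_eq_inner: "omega1 g y p X = ((1 / sqrt (FK2 g y p)) *\<^sub>R (p, - y)) \<bullet> X"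
  by (cases X) (simp add: omega1_def diff_divide_distrib)

lemma omega2_eq_inner:
  "omega2 g y p X = ((1 / sqrt (FK2 g y p)) *\<^sub>R (g *v y, ginv g *v p)) \<bullet> X"
  by (cases X) (simp add: omega2_def add_divide_distrib)

lemma omega1_phiV:
  assumes "transpose g = g" and "transpose (ginv g) = ginv g"
  shows "omega1 g y p (phiV g X) = omega2 g y p X"
  using symmetric_matrix_inner[OF assms(1)] symmetric_matrix_inner[OF assms(2)]
  by (simp add: omega1_def omega2_def phiV_def inner_commute)

lemma omega2_xi1: "omega2 g y p (xi1 g y p) = 0"
  by (simp add: omega2_def xi1_def inner_commute)

lemma omega2_xi2: "FK2 g y p > 0 \<Longrightarrow> omega2 g y p (xi2 g y p) = 1"
  by (simp add: omega2_def xi2_def FK2_def inner_commute real_div_sqrt flip: add_divide_distrib)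

lemma big_tangent_almost_complex_pair:
  assumes "transpose g = g" and "invertible g" and "FK2 g y p > 0"
  shows "almost_complex_pair (phiV g) (xi1 g y p) (xi2 g y p) (omega1 g y p) (omega2 g y p)"
proof (rule almost_complex_pair.intro)
  show "linear (omega1 g y p)"
    unfolding omega1_eq_inner[abs_def] by (rule bounded_linear_inner_right[THEN bounded_linear.linear])
  show "omega1 g y p (phiV g X) = omega2 g y p X" for X
    using assms(1,2) by (simp add: omega1_phiV symmetric_matrix_inv ginv_def)
qed (use assms in \<open>simp_all add: linear_phiV phiV_phiV phiV_xi2 omega2_xi1 omega2_xi2\<close>)

lemma dim_common_kernel_omega:
  fixes g :: "real^'n^'n"
  assumes "transpose g = g" and "invertible g" and "FK2 g y p > 0"
  shows "dim {X. omega1 g y p X = 0 \<and> omega2 g y p X = 0} = 2 * CARD('n) - 2"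
proof -
  interpret almost_complex_pair "phiV g" "xi1 g y p" "xi2 g y p" "omega1 g y p" "omega2 g y p"
    using assms by (rule big_tangent_almost_complex_pair)
  define u\<^sub>1 :: "'n vert" where "u\<^sub>1 = (1 / sqrt (FK2 g y p)) *\<^sub>R (p, - y)"
  define u\<^sub>2 :: "'n vert" where "u\<^sub>2 = (1 / sqrt (FK2 g y p)) *\<^sub>R (g *v y, ginv g *v p)"
  have \<omega>: "omega1 g y p = (\<bullet>) u\<^sub>1" "omega2 g y p = (\<bullet>) u\<^sub>2"
    by (simp_all add: fun_eq_iff u\<^sub>1_def u\<^sub>2_def omega1_eq_inner omega2_eq_inner)
  have "dim {u\<^sub>1, u\<^sub>2} = 2"
    using \<eta>\<^sub>1_\<xi>\<^sub>1 \<eta>\<^sub>2_\<xi>\<^sub>1 \<eta>\<^sub>2_\<xi>\<^sub>2 unfolding \<omega> by (rule dim_pair_with_dual_basis)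
  then show ?thesis
    using dim_orthogonal_complement[of "{u\<^sub>1, u\<^sub>2}"] by (simp add: \<omega>)
qed

theorem theorem5p4:
  fixes g :: "real^'n^'n" and y p :: "real^'n"
  assumes sym: "transpose g = g"
    and posdef: "\<And>v. v \<noteq> 0 \<Longrightarrow> v \<bullet> (g *v v) > 0"
    and pos: "FK2 g y p > 0"
  shows "(\<forall>X\<in>Vxi2 g y p. fV g y p X \<in> Vxi2 g y p)
    \<and> xi1 g y p \<in> Vxi2 g y p
    \<and> (\<forall>X\<in>Vxi2 g y p. fV g y p (fV g y p (fV g y p X)) + fV g y p X = 0)
    \<and> dim (fV g y p ` Vxi2 g y p) = 2 * CARD('n) - 2
    \<and> omega1 g y p (xi1 g y p) = 1
    \<and> fV g y p (xi1 g y p) = 0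
    \<and> (\<forall>X\<in>Vxi2 g y p. omega1 g y p (fV g y p X) = 0)
    \<and> (\<forall>X\<in>Vxi2 g y p. fV g y p (fV g y p X) = - X + omega1 g y p X *\<^sub>R xi1 g y p)"
proof -
  have inv: "invertible g"
    using posdef by (rule positive_definite_imp_invertible)
  interpret almost_complex_pair "phiV g" "xi1 g y p" "xi2 g y p" "omega1 g y p" "omega2 g y p"
    using sym inv pos by (rule big_tangent_almost_complex_pair)
  have fV_eq: "fV g y p = f"
    by (simp add: fun_eq_iff fV_def f_def)
  \<comment> \<open>separate, because \<open>f_f\<close> would otherwise rewrite the inner \<open>f (f X)\<close> first\<close>
  have "\<forall>X\<in>Vxi2 g y p. fV g y p (fV g y p (fV g y p X)) + fV g y p X = 0"
    by (simp add: fV_eq Vxi2_def f_f_f)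
  then show ?thesis
    using dim_common_kernel_omega[OF sym inv pos]
    by (simp add: fV_eq Vxi2_def image_f_kernel \<eta>\<^sub>1_\<xi>\<^sub>1 \<eta>\<^sub>2_\<xi>\<^sub>1 \<eta>\<^sub>1_f \<eta>\<^sub>2_f f_\<xi>\<^sub>1 f_f)
qed

end
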